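(* Let $\omega$ be a primitive cube root of unity and assume $\alpha_1=\alpha_3=\alpha_4$. Let $(y(t),z(t))$ be the unique solution of the system (H), holomorphic near $t=-\omega^2$, with $y(-\omega^2)=-\omega^2$ and $z(-\omega^2)=\frac{2\omega+1}{3}\alpha_2$. Then $$y(t)=-\omega^2+(1-\alpha_0)(t+\omega^2)+\tfrac{1+2\omega}{3}\alpha_0(1-\alpha_0)(t+\omega^2)^2+O((t+\omega^2)^3),\quad z(t)=\tfrac{2\omega+1}{3}\alpha_2-\tfrac{\alpha_2}{3}(1-\alpha_0)(t+\omega^2)+O((t+\omega^2)^2),$$ and this solution is invariant under $\sigma_2\circ\sigma_1$: $$y\Big(\frac1{1-t}\Big)=\frac{1}{1-y(t)},\qquad z\Big(\frac1{1-t}\Big)=-(1-y(t))\big\{-z(t)(1-y(t))+\alpha_2\big\}.$$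
   Context: Fix complex parameters $\alpha_0,\dots,\alpha_4$ with $\alpha_0+\alpha_1+2\alpha_2+\alpha_3+\alpha_4=1$. The system (H) is $$t(t-1)\frac{dy}{dt}=2y(y-1)(y-t)z-(\alpha_0-1)y(y-1)-\alpha_3y(y-t)-\alpha_4(y-1)(y-t),$$ $$t(t-1)\frac{dz}{dt}=-\big(y(y-1)+(y-1)(y-t)+y(y-t)\big)z^2+\big((2y-1)(\alpha_0-1)+(2y-t)\alpha_3+(2y-t-1)\alpha_4\big)z-(\alpha_1+\alpha_2)\alpha_2.$$ The transformation $\sigma_2\circ\sigma_1$ is $t\mapsto\frac1{1-t}$, $y\mapsto\frac1{1-y}$, $z\mapsto-(1-y)(-z(1-y)+\alpha_2)$, with parameters $(\alpha_1,\alpha_3,\alpha_4)$ permuted cyclically; when $\alpha_1=\alpha_3=\alpha_4$ it maps solutions of (H) to solutions of (H). *)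

theory Defs
  imports "HOL-Analysis.Analysis" "HOL-Library.Landau_Symbols"
begin

text \<open>Right-hand side of the first equation of system (H):
  t(t-1) dy/dt = Hy a0 a3 a4 t y z.\<close>
definition Hy :: "complex \<Rightarrow> complex \<Rightarrow> complex \<Rightarrow> complex \<Rightarrow> complex \<Rightarrow> complex \<Rightarrow> complex" where
  "Hy a0 a3 a4 t y z =
     2 * y * (y - 1) * (y - t) * z - (a0 - 1) * y * (y - 1) - a3 * y * (y - t)
     - a4 * (y - 1) * (y - t)"

text \<open>Right-hand side of the second equation of system (H):
  t(t-1) dz/dt = Hz a0 a1 a2 a3 a4 t y z.\<close>
definition Hz :: "complex \<Rightarrow> complex \<Rightarrow> complex \<Rightarrow> complex \<Rightarrow> complex \<Rightarrow> complex \<Rightarrow> complex \<Rightarrow> complex \<Rightarrow> complex" where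
  "Hz a0 a1 a2 a3 a4 t y z =
     - (y * (y - 1) + (y - 1) * (y - t) + y * (y - t)) * z ^ 2
     + ((2 * y - 1) * (a0 - 1) + (2 * y - t) * a3 + (2 * y - t - 1) * a4) * z
     - (a1 + a2) * a2"

end

theory Submission
  imports Defs "HOL-Complex_Analysis.Complex_Analysis"
begin

(* The point p = -\<omega>^2 satisfies p^2 - p + 1 = 0, so it is a fixed point of t \<mapsto> 1/(1-t) with
   p(p-1) = -1, and the initial value (p, (2p-1) a2/3) is fixed by
   (y, z) \<mapsto> (1/(1-y), -(1-y)(-z(1-y) + a2)).  For a1 = a3 = a4 the map \<sigma>2\<circ>\<sigma>1 sends solutions
   of (H) to solutions; the transformed solution therefore has the same initial data at the
   regular point p, and local uniqueness (a Lipschitz estimate for the difference of two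
   solutions on a small disc) shows that it is the original solution.  The Taylor coefficients
   are obtained by evaluating (H) and its derivative at p; the remainders are controlled by
   Taylor's theorem for holomorphic functions. *)

lemma deriv_bound_imp_zero_on_cball:
  fixes u v :: "complex \<Rightarrow> complex"
  assumes S: "open S" "cball t0 \<rho> \<subseteq> S" and hol: "u holomorphic_on S" "v holomorphic_on S"
    and init: "u t0 = 0" "v t0 = 0"
    and C: "C \<ge> 0" "C * \<rho> \<le> 1 / 4"
    and bound: "\<forall>t\<in>S. norm (deriv u t) \<le> C * (norm (u t) + norm (v t))"
               "\<forall>t\<in>S. norm (deriv v t) \<le> C * (norm (u t) + norm (v t))"
    and t: "t \<in> cball t0 \<rho>"
  shows "u t = 0 \<and> v t = 0"
proof -
  define K where "K = cball t0 \<rho>"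
  define \<phi> where "\<phi> t = norm (u t) + norm (v t)" for t
  have "continuous_on K \<phi>"
    unfolding \<phi>_def K_def using hol S(2)
    by (intro continuous_intros) (auto intro: holomorphic_on_imp_continuous_on holomorphic_on_subset)
  moreover have "compact K" by (simp add: K_def)
  moreover have "K \<noteq> {}" using t K_def by blast
  ultimately obtain tm where "tm \<in> K" and tm: "\<forall>t\<in>K. \<phi> t \<le> \<phi> tm"
    using continuous_attains_sup by blast
  have "t0 \<in> K" using t zero_le_dist[of t0 t] unfolding K_def mem_cball dist_self by linarith
  define N where "N = \<phi> tm"
  have "N \<ge> 0" by (simp add: N_def \<phi>_def)
  have small: "norm (w t) \<le> N / 4" if "t \<in> K" and w: "w \<in> {u, v}" for w t
  proof -
    have "norm (w t - w t0) \<le> C * N * norm (t - t0)"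
    proof (rule field_differentiable_bound[of K w "deriv w"])
      fix s assume "s \<in> K"
      then have "s \<in> S" using S(2) by (auto simp: K_def)
      then show "(w has_field_derivative deriv w s) (at s within K)"
        using w hol S by (auto intro: holomorphic_derivI)
      have "norm (deriv w s) \<le> C * \<phi> s" using bound w \<open>s \<in> S\<close> by (auto simp: \<phi>_def)
      also have "\<dots> \<le> C * N" using tm \<open>s \<in> K\<close> C(1) by (simp add: N_def mult_left_mono)
      finally show "norm (deriv w s) \<le> C * N" .
    qed (use that \<open>t0 \<in> K\<close> in \<open>auto simp: K_def\<close>)
    also have "\<dots> \<le> C * N * \<rho>"
      using that C(1) \<open>N \<ge> 0\<close> by (intro mult_left_mono) (auto simp: K_def dist_norm norm_minus_commute)
    also have "\<dots> \<le> N / 4"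
      using mult_right_mono[OF C(2) \<open>N \<ge> 0\<close>] by (simp add: algebra_simps)
    finally show ?thesis using w init by auto
  qed
  have "N \<le> N / 2"
    using small[OF \<open>tm \<in> K\<close>, of u] small[OF \<open>tm \<in> K\<close>, of v] by (simp add: N_def \<phi>_def)
  then have "N = 0" using \<open>N \<ge> 0\<close> by simp
  then show ?thesis using small[of t u] small[of t v] t by (auto simp: K_def)
qed

lemma deriv_bound_imp_eventually_zero:
  fixes u v :: "complex \<Rightarrow> complex"
  assumes S: "open S" "t0 \<in> S" and hol: "u holomorphic_on S" "v holomorphic_on S"
    and init: "u t0 = 0" "v t0 = 0" and "C \<ge> 0"
    and bound: "\<forall>t\<in>S. norm (deriv u t) \<le> C * (norm (u t) + norm (v t))"
               "\<forall>t\<in>S. norm (deriv v t) \<le> C * (norm (u t) + norm (v t))"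
  shows "\<forall>\<^sub>F t in nhds t0. u t = 0 \<and> v t = 0"
proof -
  obtain r where "r > 0" "cball t0 r \<subseteq> S"
    using S open_contains_cball by blast
  define \<rho> where "\<rho> = min r (1 / (4 * C + 1))"
  have "\<rho> > 0" using \<open>r > 0\<close> \<open>C \<ge> 0\<close> by (simp add: \<rho>_def)
  have "C * \<rho> \<le> C * (1 / (4 * C + 1))" using \<open>C \<ge> 0\<close> by (intro mult_left_mono) (auto simp: \<rho>_def)
  also have "\<dots> \<le> 1 / 4" using \<open>C \<ge> 0\<close> by (simp add: field_simps)
  finally have "C * \<rho> \<le> 1 / 4" .
  moreover have "cball t0 \<rho> \<subseteq> S" using \<open>cball t0 r \<subseteq> S\<close> by (auto simp: \<rho>_def)
  ultimately have "\<forall>t\<in>ball t0 \<rho>. u t = 0 \<and> v t = 0"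
    using deriv_bound_imp_zero_on_cball[OF S(1) _ hol init \<open>C \<ge> 0\<close> _ bound] by auto
  then show ?thesis
    unfolding eventually_nhds using \<open>\<rho> > 0\<close> by (intro exI[of _ "ball t0 \<rho>"]) auto
qed

lemma linear_ode_eventually_zero:
  fixes u v a b c d :: "complex \<Rightarrow> complex"
  assumes S: "open S" "t0 \<in> S" and hol: "u holomorphic_on S" "v holomorphic_on S"
    and init: "u t0 = 0" "v t0 = 0"
    and cont: "isCont a t0" "isCont b t0" "isCont c t0" "isCont d t0"
    and ode: "\<forall>t\<in>S. deriv u t = a t * u t + b t * v t"
             "\<forall>t\<in>S. deriv v t = c t * u t + d t * v t"
  shows "\<forall>\<^sub>F t in nhds t0. u t = 0 \<and> v t = 0"
proof -
  define C where "C = norm (a t0) + norm (b t0) + norm (c t0) + norm (d t0) + 1"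
  have "\<forall>\<^sub>F t in nhds t0. norm (k t) \<le> C" if "k \<in> {a, b, c, d}" for k
  proof -
    have "norm (k t0) + 1 \<le> C" using that by (auto simp: C_def)
    have "(k \<longlongrightarrow> k t0) (nhds t0)"
      using cont that tendsto_at_iff_tendsto_nhds isCont_def by blast
    then have "\<forall>\<^sub>F t in nhds t0. dist (k t) (k t0) < 1" by (rule tendstoD) simp
    then show ?thesis
    proof eventually_elim
      case (elim t)
      have "norm (k t) \<le> norm (k t0) + norm (k t - k t0)" by (rule norm_triangle_sub)
      with elim \<open>norm (k t0) + 1 \<le> C\<close> show ?case by (simp add: dist_norm)
    qed
  qed
  then have "\<forall>\<^sub>F t in nhds t0. \<forall>k\<in>{a, b, c, d}. norm (k t) \<le> C"
    by (simp add: eventually_conj_iff)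
  then obtain T where T: "open T" "t0 \<in> T" and bounded: "\<forall>t\<in>T. \<forall>k\<in>{a, b, c, d}. norm (k t) \<le> C"
    unfolding eventually_nhds by blast
  have lin_bound: "norm (p t * u t + q t * v t) \<le> C * (norm (u t) + norm (v t))"
    if "t \<in> T" "p \<in> {a, b, c, d}" "q \<in> {a, b, c, d}" for p q t
  proof -
    have "norm (p t * u t + q t * v t) \<le> norm (p t) * norm (u t) + norm (q t) * norm (v t)"
      by (metis norm_mult norm_triangle_ineq)
    also have "\<dots> \<le> C * norm (u t) + C * norm (v t)"
      using bounded that by (intro add_mono mult_right_mono) auto
    finally show ?thesis by (simp add: distrib_left)
  qed
  show ?thesis
  proof (rule deriv_bound_imp_eventually_zero[where S = "S \<inter> T"])
    show "\<forall>t\<in>S \<inter> T. norm (deriv u t) \<le> C * (norm (u t) + norm (v t))"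
         "\<forall>t\<in>S \<inter> T. norm (deriv v t) \<le> C * (norm (u t) + norm (v t))"
      using ode lin_bound by auto
  qed (use S T hol init in \<open>auto simp: C_def intro: holomorphic_on_subset\<close>)
qed

lemma holomorphic_taylor_bigo:
  fixes f :: "complex \<Rightarrow> complex"
  assumes hol: "f holomorphic_on S" and S: "open S" "x0 \<in> S"
  shows "(\<lambda>t. f t - (\<Sum>i\<le>n. (deriv ^^ i) f x0 * (t - x0)^i / fact i)) \<in> O[at x0](\<lambda>t. (t - x0)^Suc n)"
proof -
  obtain r where "r > 0" and K: "cball x0 r \<subseteq> S"
    using S open_contains_cball by blast
  have hol_i: "(deriv ^^ i) f holomorphic_on S" for i
    using hol S(1) by (rule holomorphic_higher_deriv)
  have "continuous_on (cball x0 r) ((deriv ^^ Suc n) f)"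
    using holomorphic_on_imp_continuous_on[OF holomorphic_on_subset[OF hol_i K]] .
  then obtain B where B: "\<And>x. x \<in> cball x0 r \<Longrightarrow> norm ((deriv ^^ Suc n) f x) \<le> B"
    using continuous_on_compact_bound[OF compact_cball] by metis
  have "norm (f t - (\<Sum>i\<le>n. (deriv ^^ i) f x0 * (t - x0)^i / fact i))
          \<le> B / fact n * norm ((t - x0)^Suc n)" if "t \<in> cball x0 r" for t
  proof -
    have "norm ((deriv ^^ 0) f t - (\<Sum>i\<le>n. (deriv ^^ i) f x0 * (t - x0)^i / fact i))
            \<le> B * norm (t - x0)^Suc n / fact n"
    proof (rule complex_Taylor[where f = "\<lambda>i. (deriv ^^ i) f", OF convex_cball _ B])
      fix i x assume "x \<in> cball x0 r"
      then have "((deriv ^^ i) f has_field_derivative deriv ((deriv ^^ i) f) x) (at x)"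
        using K by (intro holomorphic_derivI[OF hol_i S(1)]) auto
      then show "((deriv ^^ i) f has_field_derivative (deriv ^^ Suc i) f x) (at x within cball x0 r)"
        by (simp add: has_field_derivative_at_within)
    qed (use that \<open>r > 0\<close> in auto)
    then show ?thesis by (simp add: norm_power del: power_Suc)
  qed
  moreover have "\<forall>\<^sub>F t in at x0. t \<in> cball x0 r"
    using eventually_at_ball[OF \<open>r > 0\<close>, of x0 UNIV] by eventually_elim auto
  ultimately show ?thesis
    by (intro bigoI[where c = "B / fact n"]) (auto elim!: eventually_mono)
qed

definition Hy_dy :: "complex \<Rightarrow> complex \<Rightarrow> complex \<Rightarrow> complex \<Rightarrow> complex \<Rightarrow> complex \<Rightarrow> complex \<Rightarrow> complex" where
  "Hy_dy a0 a3 a4 t y1 y2 z2 =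
     2 * z2 * (y1^2 + y1 * y2 + y2^2 - (1 + t) * (y1 + y2) + t) - (a0 - 1) * (y1 + y2 - 1)
     - a3 * (y1 + y2 - t) - a4 * (y1 + y2 - 1 - t)"

definition Hy_dz :: "complex \<Rightarrow> complex \<Rightarrow> complex" where
  "Hy_dz t y1 = 2 * y1 * (y1 - 1) * (y1 - t)"

definition Hz_dy :: "complex \<Rightarrow> complex \<Rightarrow> complex \<Rightarrow> complex \<Rightarrow> complex \<Rightarrow> complex \<Rightarrow> complex \<Rightarrow> complex" where
  "Hz_dy a0 a3 a4 t y1 y2 z2 = (2 * (1 + t) - 3 * (y1 + y2)) * z2^2 + 2 * (a0 - 1 + a3 + a4) * z2"

definition Hz_dz :: "complex \<Rightarrow> complex \<Rightarrow> complex \<Rightarrow> complex \<Rightarrow> complex \<Rightarrow> complex \<Rightarrow> complex \<Rightarrow> complex" where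
  "Hz_dz a0 a3 a4 t y1 z1 z2 =
     (2 * y1 - 1) * (a0 - 1) + (2 * y1 - t) * a3 + (2 * y1 - t - 1) * a4
     - (3 * y1^2 - 2 * (1 + t) * y1 + t) * (z1 + z2)"

lemma Hy_diff:
  "Hy a0 a3 a4 t y1 z1 - Hy a0 a3 a4 t y2 z2
     = Hy_dy a0 a3 a4 t y1 y2 z2 * (y1 - y2) + Hy_dz t y1 * (z1 - z2)"
  unfolding Hy_def Hy_dy_def Hy_dz_def by (simp add: algebra_simps power2_eq_square)

lemma Hz_diff:
  "Hz a0 a1 a2 a3 a4 t y1 z1 - Hz a0 a1 a2 a3 a4 t y2 z2
     = Hz_dy a0 a3 a4 t y1 y2 z2 * (y1 - y2) + Hz_dz a0 a3 a4 t y1 z1 z2 * (z1 - z2)"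
  unfolding Hz_def Hz_dy_def Hz_dz_def by (simp add: algebra_simps power2_eq_square)

lemma H_solutions_eq_near:
  fixes y1 z1 y2 z2 :: "complex \<Rightarrow> complex"
  assumes S: "open S" "t0 \<in> S" and t0: "t0 \<noteq> 0" "t0 \<noteq> 1"
    and hol: "y1 holomorphic_on S" "z1 holomorphic_on S" "y2 holomorphic_on S" "z2 holomorphic_on S"
    and ode1: "\<forall>t\<in>S. t * (t - 1) * deriv y1 t = Hy a0 a3 a4 t (y1 t) (z1 t)"
              "\<forall>t\<in>S. t * (t - 1) * deriv z1 t = Hz a0 a1 a2 a3 a4 t (y1 t) (z1 t)"
    and ode2: "\<forall>t\<in>S. t * (t - 1) * deriv y2 t = Hy a0 a3 a4 t (y2 t) (z2 t)"
              "\<forall>t\<in>S. t * (t - 1) * deriv z2 t = Hz a0 a1 a2 a3 a4 t (y2 t) (z2 t)"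
    and init: "y1 t0 = y2 t0" "z1 t0 = z2 t0"
  shows "\<forall>\<^sub>F t in nhds t0. y1 t = y2 t \<and> z1 t = z2 t"
proof -
  define S' where "S' = S - {0, 1}"
  have S': "open S'" "t0 \<in> S'" "S' \<subseteq> S" using S t0 by (auto simp: S'_def)
  define a where "a t = Hy_dy a0 a3 a4 t (y1 t) (y2 t) (z2 t) / (t * (t - 1))" for t
  define b where "b t = Hy_dz t (y1 t) / (t * (t - 1))" for t
  define c where "c t = Hz_dy a0 a3 a4 t (y1 t) (y2 t) (z2 t) / (t * (t - 1))" for t
  define d where "d t = Hz_dz a0 a3 a4 t (y1 t) (z1 t) (z2 t) / (t * (t - 1))" for t
  have "isCont f t0" if "f holomorphic_on S" for f
    using that S continuous_on_eq_continuous_at holomorphic_on_imp_continuous_on by blast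
  with hol have cont: "isCont a t0" "isCont b t0" "isCont c t0" "isCont d t0"
    unfolding a_def b_def c_def d_def Hy_dy_def Hy_dz_def Hz_dy_def Hz_dz_def
    using t0 by (auto intro!: continuous_intros)
  have diff: "deriv (\<lambda>t. f1 t - f2 t) t = deriv f1 t - deriv f2 t"
    if "f1 holomorphic_on S" "f2 holomorphic_on S" "t \<in> S" for f1 f2 t
    using that S by (intro deriv_diff) (auto intro: holomorphic_on_imp_differentiable_at)
  have solve: "D = A / q * u + B / q * v" if "q * D = A * u + B * v" "q \<noteq> 0" for q D A B u v :: complex
    using that by (simp add: field_simps)
  have "deriv (\<lambda>t. y1 t - y2 t) t = a t * (y1 t - y2 t) + b t * (z1 t - z2 t) \<and>
        deriv (\<lambda>t. z1 t - z2 t) t = c t * (y1 t - y2 t) + d t * (z1 t - z2 t)" if "t \<in> S'" for t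
  proof -
    have "t \<in> S" and nz: "t * (t - 1) \<noteq> 0" using that by (auto simp: S'_def)
    have ey: "t * (t - 1) * (deriv y1 t - deriv y2 t) = Hy a0 a3 a4 t (y1 t) (z1 t) - Hy a0 a3 a4 t (y2 t) (z2 t)"
      and ez: "t * (t - 1) * (deriv z1 t - deriv z2 t)
             = Hz a0 a1 a2 a3 a4 t (y1 t) (z1 t) - Hz a0 a1 a2 a3 a4 t (y2 t) (z2 t)"
      using ode1 ode2 \<open>t \<in> S\<close> by (simp_all add: right_diff_distrib)
    from solve[OF ey[unfolded Hy_diff] nz] solve[OF ez[unfolded Hz_diff] nz] show ?thesis
      unfolding diff[OF hol(1,3) \<open>t \<in> S\<close>] diff[OF hol(2,4) \<open>t \<in> S\<close>] a_def b_def c_def d_def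
      by simp
  qed
  then have "\<forall>\<^sub>F t in nhds t0. y1 t - y2 t = 0 \<and> z1 t - z2 t = 0"
    using S' hol init cont
    by (intro linear_ode_eventually_zero[of S' t0 _ _ a b c d])
       (auto intro!: holomorphic_intros intro: holomorphic_on_subset)
  then show ?thesis by simp
qed

lemma H_solution_derivs_at_fixed_point:
  fixes a0 a a2 p :: complex and y z :: "complex \<Rightarrow> complex"
  assumes a: "a0 + 3 * a + 2 * a2 = 1" and p: "p^2 - p + 1 = 0"
    and S: "open S" "p \<in> S" and hol: "y holomorphic_on S" "z holomorphic_on S"
    and ode_y: "\<forall>t\<in>S. t * (t - 1) * deriv y t = Hy a0 a a t (y t) (z t)"
    and ode_z: "\<forall>t\<in>S. t * (t - 1) * deriv z t = Hz a0 a a2 a a t (y t) (z t)"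
    and init: "y p = p" "z p = (2 * p - 1) / 3 * a2"
  shows "deriv y p = 1 - a0" and "deriv z p = - a2 / 3 * (1 - a0)"
    and "deriv (deriv y) p = 2 * ((2 * p - 1) / 3 * a0 * (1 - a0))"
proof -
  have pp: "p * (p - 1) = -1" using p by (simp add: algebra_simps power2_eq_square)
  have "p * (p - 1) * deriv y p = Hy a0 a a p p ((2 * p - 1) / 3 * a2)"
    using ode_y S(2) by (simp add: init)
  with pp show y': "deriv y p = 1 - a0"
    unfolding Hy_def by algebra
  have "p * (p - 1) * deriv z p = Hz a0 a a2 a a p p ((2 * p - 1) / 3 * a2)"
    using ode_z S(2) by (simp add: init)
  with p pp a show z': "deriv z p = - a2 / 3 * (1 - a0)"
    unfolding Hz_def by algebra
  have "p \<noteq> 0" "p \<noteq> 1" using pp by auto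
  then have "\<forall>\<^sub>F t in nhds p. t \<in> S \<and> t \<noteq> 0 \<and> t \<noteq> 1"
    using eventually_nhds_in_open[OF S] by (auto intro!: eventually_conj t1_space_nhds)
  then have "\<forall>\<^sub>F t in nhds p. deriv y t = Hy a0 a a t (y t) (z t) / (t * (t - 1))"
    by eventually_elim (use ode_y in \<open>auto simp: field_simps\<close>)
  then have "deriv (deriv y) p = deriv (\<lambda>t. Hy a0 a a t (y t) (z t) / (t * (t - 1))) p"
    by (rule deriv_cong_ev) simp
  also have "\<dots> = 2 * ((2 * p - 1) / 3 * a0 * (1 - a0))"
  proof (rule DERIV_imp_deriv)
    have dy: "(y has_field_derivative 1 - a0) (at p)" and dz: "(z has_field_derivative - a2 / 3 * (1 - a0)) (at p)"
      using holomorphic_derivI[OF hol(1) S] holomorphic_derivI[OF hol(2) S] y' z' by auto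
    show "((\<lambda>t. Hy a0 a a t (y t) (z t) / (t * (t - 1))) has_field_derivative
                 2 * ((2 * p - 1) / 3 * a0 * (1 - a0))) (at p)"
      unfolding Hy_def
      by (rule derivative_eq_intros dy dz refl)+ (use p a in \<open>simp_all add: pp init, algebra\<close>)
  qed
  finally show "deriv (deriv y) p = 2 * ((2 * p - 1) / 3 * a0 * (1 - a0))" .
qed

lemma H_solution_expansion:
  fixes a0 a a2 p :: complex and y z :: "complex \<Rightarrow> complex"
  assumes a: "a0 + 3 * a + 2 * a2 = 1" and p: "p^2 - p + 1 = 0"
    and S: "open S" "p \<in> S" and hol: "y holomorphic_on S" "z holomorphic_on S"
    and ode_y: "\<forall>t\<in>S. t * (t - 1) * deriv y t = Hy a0 a a t (y t) (z t)"
    and ode_z: "\<forall>t\<in>S. t * (t - 1) * deriv z t = Hz a0 a a2 a a t (y t) (z t)"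
    and init: "y p = p" "z p = (2 * p - 1) / 3 * a2"
  shows "(\<lambda>t. y t - (p + (1 - a0) * (t - p) + (2 * p - 1) / 3 * a0 * (1 - a0) * (t - p)^2))
           \<in> O[at p](\<lambda>t. (t - p)^3)"
    and "(\<lambda>t. z t - ((2 * p - 1) / 3 * a2 - a2 / 3 * (1 - a0) * (t - p)))
           \<in> O[at p](\<lambda>t. (t - p)^2)"
proof -
  note derivs = H_solution_derivs_at_fixed_point[OF assms]
  have "(\<Sum>i\<le>2. (deriv ^^ i) y p * (t - p)^i / fact i)
          = p + (1 - a0) * (t - p) + (2 * p - 1) / 3 * a0 * (1 - a0) * (t - p)^2" for t
    by (simp add: eval_nat_numeral init derivs)
  moreover have "(\<Sum>i\<le>1. (deriv ^^ i) z p * (t - p)^i / fact i)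
          = (2 * p - 1) / 3 * a2 - a2 / 3 * (1 - a0) * (t - p)" for t
    by (simp add: init derivs)
  ultimately show "(\<lambda>t. y t - (p + (1 - a0) * (t - p) + (2 * p - 1) / 3 * a0 * (1 - a0) * (t - p)^2))
                     \<in> O[at p](\<lambda>t. (t - p)^3)"
    and "(\<lambda>t. z t - ((2 * p - 1) / 3 * a2 - a2 / 3 * (1 - a0) * (t - p))) \<in> O[at p](\<lambda>t. (t - p)^2)"
    using holomorphic_taylor_bigo[OF hol(1) S, of 2] holomorphic_taylor_bigo[OF hol(2) S, of 1]
    by (simp_all add: numeral_3_eq_3 numeral_2_eq_2)
qed

lemma Hy_sigma21:
  fixes a0 a a2 s y z :: complex
  assumes "a0 + 3 * a + 2 * a2 = 1" and "s \<noteq> 0" and "y \<noteq> 1"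
  shows "- s * Hy a0 a a (1 - 1 / s) y z
           = (1 - y)^2 * Hy a0 a a s (1 / (1 - y)) (- (1 - y) * (- z * (1 - y) + a2))"
proof -
  have "1 / s * s = 1" and "1 / (1 - y) * (1 - y) = 1" using assms(2,3) by simp_all
  with assms(1) show ?thesis
    unfolding Hy_def by algebra
qed

lemma Hz_sigma21:
  fixes a0 a a2 s y z :: complex
  assumes "a0 + 3 * a + 2 * a2 = 1" and "s \<noteq> 0" and "y \<noteq> 1"
  shows "- s * ((a2 - 2 * (1 - y) * z) * Hy a0 a a (1 - 1 / s) y z
                 + (1 - y)^2 * Hz a0 a a2 a a (1 - 1 / s) y z)
           = Hz a0 a a2 a a s (1 / (1 - y)) (- (1 - y) * (- z * (1 - y) + a2))"
proof -
  have "1 / s * s = 1" and "1 / (1 - y) * (1 - y) = 1" using assms(2,3) by simp_all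
  with assms(1) show ?thesis
    unfolding Hy_def Hz_def by algebra
qed

lemma sigma21_has_field_derivative:
  fixes y z :: "complex \<Rightarrow> complex" and s a2 :: complex
  defines "t \<equiv> 1 - 1 / s"
  assumes dy: "(y has_field_derivative y') (at t)" and dz: "(z has_field_derivative z') (at t)"
    and s: "s \<noteq> 0" and yt: "y t \<noteq> 1"
  shows "((\<lambda>s. 1 / (1 - y (1 - 1 / s))) has_field_derivative y' / s^2 / (1 - y t)^2) (at s)"
    and "((\<lambda>s. - (1 - y (1 - 1 / s)) * (- z (1 - 1 / s) * (1 - y (1 - 1 / s)) + a2))
           has_field_derivative ((a2 - 2 * (1 - y t) * z t) * y' + (1 - y t)^2 * z') / s^2) (at s)"
proof -
  have "((\<lambda>s. 1 - 1 / s) has_field_derivative 1 / s^2) (at s)"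
    using s by (auto intro!: derivative_eq_intros simp: power2_eq_square)
  from DERIV_chain2[OF dy[unfolded t_def] this] DERIV_chain2[OF dz[unfolded t_def] this]
  have "((\<lambda>s. y (1 - 1 / s)) has_field_derivative y' / s^2) (at s)"
       "((\<lambda>s. z (1 - 1 / s)) has_field_derivative z' / s^2) (at s)"
    by simp_all
  with s yt show "((\<lambda>s. 1 / (1 - y (1 - 1 / s))) has_field_derivative y' / s^2 / (1 - y t)^2) (at s)"
    and "((\<lambda>s. - (1 - y (1 - 1 / s)) * (- z (1 - 1 / s) * (1 - y (1 - 1 / s)) + a2))
           has_field_derivative ((a2 - 2 * (1 - y t) * z t) * y' + (1 - y t)^2 * z') / s^2) (at s)"
    unfolding t_def by (auto intro!: derivative_eq_intros simp: field_simps power2_eq_square)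
qed

lemma H_sigma21_pointwise:
  fixes a0 a a2 s y z y' z' :: complex
  defines "t \<equiv> 1 - 1 / s"
  assumes a: "a0 + 3 * a + 2 * a2 = 1" and s: "s \<noteq> 0" and y: "y \<noteq> 1"
    and ey: "t * (t - 1) * y' = Hy a0 a a t y z"
    and ez: "t * (t - 1) * z' = Hz a0 a a2 a a t y z"
  shows "s * (s - 1) * (y' / s^2 / (1 - y)^2)
           = Hy a0 a a s (1 / (1 - y)) (- (1 - y) * (- z * (1 - y) + a2))"
    and "s * (s - 1) * (((a2 - 2 * (1 - y) * z) * y' + (1 - y)^2 * z') / s^2)
           = Hz a0 a a2 a a s (1 / (1 - y)) (- (1 - y) * (- z * (1 - y) + a2))"
proof -
  have scale: "s * (s - 1) / s^2 = - s * (t * (t - 1))"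
    using s by (simp add: t_def field_simps power2_eq_square)
  have "s * (s - 1) * (y' / s^2 / (1 - y)^2) = s * (s - 1) / s^2 * y' / (1 - y)^2"
    by simp
  also have "\<dots> = - s * Hy a0 a a t y z / (1 - y)^2"
    unfolding scale ey[symmetric] by simp
  also have "\<dots> = Hy a0 a a s (1 / (1 - y)) (- (1 - y) * (- z * (1 - y) + a2))"
    using Hy_sigma21[OF a s y, of z] y by (simp add: t_def field_simps)
  finally show "s * (s - 1) * (y' / s^2 / (1 - y)^2)
                  = Hy a0 a a s (1 / (1 - y)) (- (1 - y) * (- z * (1 - y) + a2))" .
  have "s * (s - 1) * (((a2 - 2 * (1 - y) * z) * y' + (1 - y)^2 * z') / s^2)
          = s * (s - 1) / s^2 * ((a2 - 2 * (1 - y) * z) * y' + (1 - y)^2 * z')"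
    by simp
  also have "\<dots> = - s * ((a2 - 2 * (1 - y) * z) * (t * (t - 1) * y') + (1 - y)^2 * (t * (t - 1) * z'))"
    unfolding scale by algebra
  also have "\<dots> = - s * ((a2 - 2 * (1 - y) * z) * Hy a0 a a t y z + (1 - y)^2 * Hz a0 a a2 a a t y z)"
    by (simp only: ey ez)
  also have "\<dots> = Hz a0 a a2 a a s (1 / (1 - y)) (- (1 - y) * (- z * (1 - y) + a2))"
    using Hz_sigma21[OF a s y, of z] by (simp add: t_def)
  finally show "s * (s - 1) * (((a2 - 2 * (1 - y) * z) * y' + (1 - y)^2 * z') / s^2)
                  = Hz a0 a a2 a a s (1 / (1 - y)) (- (1 - y) * (- z * (1 - y) + a2))" .
qed

(* (Y, Z) is the image of (y, z) under \<sigma>2\<circ>\<sigma>1: the map s \<mapsto> 1 - 1/s inverts t \<mapsto> 1/(1-t). *)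
lemma H_solution_sigma21:
  fixes a0 a a2 :: complex and y z :: "complex \<Rightarrow> complex"
  assumes a: "a0 + 3 * a + 2 * a2 = 1"
    and S: "open S" and hol: "y holomorphic_on S" "z holomorphic_on S"
    and ode_y: "\<forall>t\<in>S. t * (t - 1) * deriv y t = Hy a0 a a t (y t) (z t)"
    and ode_z: "\<forall>t\<in>S. t * (t - 1) * deriv z t = Hz a0 a a2 a a t (y t) (z t)"
    and U: "open U" "\<forall>s\<in>U. s \<noteq> 0 \<and> 1 - 1 / s \<in> S \<and> y (1 - 1 / s) \<noteq> 1"
  defines "Y \<equiv> \<lambda>s. 1 / (1 - y (1 - 1 / s))"
    and "Z \<equiv> \<lambda>s. - (1 - y (1 - 1 / s)) * (- z (1 - 1 / s) * (1 - y (1 - 1 / s)) + a2)"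
  shows "Y holomorphic_on U" and "Z holomorphic_on U"
    and "\<forall>s\<in>U. s * (s - 1) * deriv Y s = Hy a0 a a s (Y s) (Z s)"
    and "\<forall>s\<in>U. s * (s - 1) * deriv Z s = Hz a0 a a2 a a s (Y s) (Z s)"
proof -
  have derivs:
    "(Y has_field_derivative deriv y t / s^2 / (1 - y t)^2) (at s)"
    "(Z has_field_derivative ((a2 - 2 * (1 - y t) * z t) * deriv y t + (1 - y t)^2 * deriv z t) / s^2) (at s)"
    if "s \<in> U" and t: "t = 1 - 1 / s" for s t
  proof -
    have s: "s \<noteq> 0" and tS: "1 - 1 / s \<in> S" and yt: "y (1 - 1 / s) \<noteq> 1" using U(2) that by auto
    from sigma21_has_field_derivative[OF holomorphic_derivI[OF hol(1) S tS] holomorphic_derivI[OF hol(2) S tS] s yt]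
    show "(Y has_field_derivative deriv y t / s^2 / (1 - y t)^2) (at s)"
      "(Z has_field_derivative ((a2 - 2 * (1 - y t) * z t) * deriv y t + (1 - y t)^2 * deriv z t) / s^2) (at s)"
      unfolding Y_def Z_def t by auto
  qed
  show "Y holomorphic_on U" "Z holomorphic_on U"
    unfolding holomorphic_on_open[OF U(1)] using derivs[OF _ refl] by blast+
  have "s * (s - 1) * deriv Y s = Hy a0 a a s (Y s) (Z s) \<and>
        s * (s - 1) * deriv Z s = Hz a0 a a2 a a s (Y s) (Z s)" if "s \<in> U" for s
  proof -
    have s: "s \<noteq> 0" and "1 - 1 / s \<in> S" and yt: "y (1 - 1 / s) \<noteq> 1" using U(2) that by auto
    then have "(1 - 1 / s) * ((1 - 1 / s) - 1) * deriv y (1 - 1 / s)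
                 = Hy a0 a a (1 - 1 / s) (y (1 - 1 / s)) (z (1 - 1 / s))"
      and "(1 - 1 / s) * ((1 - 1 / s) - 1) * deriv z (1 - 1 / s)
                 = Hz a0 a a2 a a (1 - 1 / s) (y (1 - 1 / s)) (z (1 - 1 / s))"
      using ode_y ode_z by auto
    from H_sigma21_pointwise[OF a s yt this] show ?thesis
      unfolding derivs[OF that refl, THEN DERIV_imp_deriv] by (simp only: Y_def Z_def)
  qed
  then show "\<forall>s\<in>U. s * (s - 1) * deriv Y s = Hy a0 a a s (Y s) (Z s)"
    and "\<forall>s\<in>U. s * (s - 1) * deriv Z s = Hz a0 a a2 a a s (Y s) (Z s)" by auto
qed

lemma H_solution_sigma21_invariant:
  fixes a0 a a2 p :: complex and y z :: "complex \<Rightarrow> complex"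
  assumes a: "a0 + 3 * a + 2 * a2 = 1" and p: "p^2 - p + 1 = 0"
    and S: "open S" "p \<in> S" and hol: "y holomorphic_on S" "z holomorphic_on S"
    and ode_y: "\<forall>t\<in>S. t * (t - 1) * deriv y t = Hy a0 a a t (y t) (z t)"
    and ode_z: "\<forall>t\<in>S. t * (t - 1) * deriv z t = Hz a0 a a2 a a t (y t) (z t)"
    and init: "y p = p" "z p = (2 * p - 1) / 3 * a2"
  shows "\<forall>\<^sub>F t in nhds p. y (1 / (1 - t)) = 1 / (1 - y t) \<and>
                         z (1 / (1 - t)) = - (1 - y t) * (- z t * (1 - y t) + a2)"
proof -
  have pp: "p * (p - 1) = -1" using p by (simp add: algebra_simps power2_eq_square)
  then have "p \<noteq> 0" "p \<noteq> 1" by auto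
  have fixed: "1 - 1 / p = p" "1 / (1 - p) = p"
    using pp \<open>p \<noteq> 0\<close> \<open>p \<noteq> 1\<close> by (simp_all add: field_simps)
  define U where "U = - {0} \<inter> (\<lambda>s. 1 - 1 / s) -` (S \<inter> y -` (- {1}))"
  have S': "open (S \<inter> y -` (- {1}))"
    using hol(1) S(1) by (intro continuous_open_preimage holomorphic_on_imp_continuous_on) auto
  have "open U"
    unfolding U_def by (rule continuous_open_preimage[OF _ _ S']) (auto intro!: continuous_intros)
  have "p \<in> U" and U: "\<forall>s\<in>U. s \<noteq> 0 \<and> 1 - 1 / s \<in> S \<and> y (1 - 1 / s) \<noteq> 1"
    using S(2) \<open>p \<noteq> 0\<close> \<open>p \<noteq> 1\<close> by (auto simp: U_def fixed init)
  define Y where "Y s = 1 / (1 - y (1 - 1 / s))" for s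
  define Z where "Z s = - (1 - y (1 - 1 / s)) * (- z (1 - 1 / s) * (1 - y (1 - 1 / s)) + a2)" for s
  note sol = H_solution_sigma21[OF a S(1) hol ode_y ode_z \<open>open U\<close> U, folded Y_def Z_def]
  have "Y p = y p" "Z p = z p"
    using p by (simp_all add: Y_def Z_def fixed init) algebra
  have "\<forall>\<^sub>F s in nhds p. y s = Y s \<and> z s = Z s"
    using S hol ode_y ode_z sol \<open>open U\<close> \<open>p \<in> U\<close> \<open>Y p = y p\<close> \<open>Z p = z p\<close>
    by (intro H_solutions_eq_near[of "S \<inter> U" p, OF _ _ \<open>p \<noteq> 0\<close> \<open>p \<noteq> 1\<close>])
       (auto intro: holomorphic_on_subset)
  moreover have "isCont (\<lambda>t. 1 / (1 - t)) p"
    using \<open>p \<noteq> 1\<close> by (intro continuous_intros) auto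
  then have "((\<lambda>t. 1 / (1 - t)) \<longlongrightarrow> p) (nhds p)"
    using fixed(2) by (metis isCont_def tendsto_at_iff_tendsto_nhds)
  ultimately have "\<forall>\<^sub>F t in nhds p. y (1 / (1 - t)) = Y (1 / (1 - t)) \<and> z (1 / (1 - t)) = Z (1 / (1 - t))"
    by (rule eventually_compose_filterlim)
  with t1_space_nhds[OF \<open>p \<noteq> 1\<close>] show ?thesis
    by eventually_elim (simp add: Y_def Z_def)
qed

theorem proposition3:
  fixes a0 a1 a2 a3 a4 \<omega> :: complex
    and y z :: "complex \<Rightarrow> complex"
    and S :: "complex set"
  assumes "a0 + a1 + 2 * a2 + a3 + a4 = 1"
    and "a1 = a3" and "a3 = a4"
    and "\<omega> ^ 3 = 1" and "\<omega> \<noteq> 1"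
    and "open S" and "- (\<omega> ^ 2) \<in> S"
    and "y holomorphic_on S" and "z holomorphic_on S"
    and "\<forall>t\<in>S. t * (t - 1) * deriv y t = Hy a0 a3 a4 t (y t) (z t)"
    and "\<forall>t\<in>S. t * (t - 1) * deriv z t = Hz a0 a1 a2 a3 a4 t (y t) (z t)"
    and "y (- (\<omega> ^ 2)) = - (\<omega> ^ 2)"
    and "z (- (\<omega> ^ 2)) = (2 * \<omega> + 1) / 3 * a2"
  shows "(\<lambda>t. y t - (- (\<omega> ^ 2) + (1 - a0) * (t + \<omega> ^ 2)
                 + (1 + 2 * \<omega>) / 3 * a0 * (1 - a0) * (t + \<omega> ^ 2) ^ 2))
           \<in> O[at (- (\<omega> ^ 2))](\<lambda>t. (t + \<omega> ^ 2) ^ 3) \<and>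
         (\<lambda>t. z t - ((2 * \<omega> + 1) / 3 * a2 - a2 / 3 * (1 - a0) * (t + \<omega> ^ 2)))
           \<in> O[at (- (\<omega> ^ 2))](\<lambda>t. (t + \<omega> ^ 2) ^ 2) \<and>
         (\<forall>\<^sub>F t in nhds (- (\<omega> ^ 2)).
           y (1 / (1 - t)) = 1 / (1 - y t) \<and>
           z (1 / (1 - t)) = - (1 - y t) * (- z t * (1 - y t) + a2))"
proof -
  have "(\<omega> - 1) * (\<omega>^2 + \<omega> + 1) = 0"
    using assms(4) by algebra
  then have "\<omega>^2 + \<omega> + 1 = 0" using assms(5) by simp
  then have \<omega>: "\<omega>^2 = - \<omega> - 1" by algebra
  define p where "p = - (\<omega> ^ 2)"
  have p: "p^2 - p + 1 = 0"
    using \<omega> unfolding p_def by algebra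
  have p_forms: "- (\<omega> ^ 2) = p" "t + \<omega> ^ 2 = t - p" "2 * \<omega> + 1 = 2 * p - 1" "1 + 2 * \<omega> = 2 * p - 1" for t
    by (simp_all add: p_def \<omega> algebra_simps)
  have a: "a0 + 3 * a3 + 2 * a2 = 1" using assms(1-3) by (simp add: algebra_simps)
  have sol: "open S" "p \<in> S" "y holomorphic_on S" "z holomorphic_on S"
    "\<forall>t\<in>S. t * (t - 1) * deriv y t = Hy a0 a3 a3 t (y t) (z t)"
    "\<forall>t\<in>S. t * (t - 1) * deriv z t = Hz a0 a3 a2 a3 a3 t (y t) (z t)"
    "y p = p" "z p = (2 * p - 1) / 3 * a2"
    using assms(2,3,6-13) unfolding p_forms by simp_all
  show ?thesis
    unfolding p_forms
    using H_solution_expansion[OF a p sol] H_solution_sigma21_invariant[OF a p sol] by blast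
qed

end
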